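(* Let $G=(V,E)$ be a simple graph with $V=\{1,\dots,n\}$ and let $\mathrm{SOL}(G)$ be the solution set of $\mathrm{LCP}(A+I,-\mathbf{e})$. Then: (a) $0\notin\mathrm{SOL}(G)$; (b) $(A+I)x\geq x$ for all $x\in\mathrm{SOL}(G)$; (c) $\mathrm{SOL}(G)\subseteq[0,1]^n$; (d) if $G$ is the disjoint union of graphs $G_1$ and $G_2$ (no edges between them), then, ordering coordinates so that those of $G_1$ come first, $\mathrm{SOL}(G)=\mathrm{SOL}(G_1)\times\mathrm{SOL}(G_2)$; (e) if $x\in\mathrm{SOL}(G)$, then $\sigma(x)$ is a dominating set of $G$; (f) if $x\in\mathrm{SOL}(G)$, then the subvector $\hat x:=x_{\sigma(x)}$ belongs to $\mathrm{SOL}(G_{\sigma(x)})$ and $\sigma(\hat x)=V(G_{\sigma(x)})$.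
   Context: $A$ is the adjacency matrix of $G$, $I$ the $n\times n$ identity and $\mathbf{e}$ the all-ones vector. $x$ solves $\mathrm{LCP}(A+I,-\mathbf{e})$ iff $x\geq 0$, $(A+I)x\geq\mathbf{e}$ and $x^\top((A+I)x-\mathbf{e})=0$. For a graph $H$, $\mathrm{SOL}(H)$ denotes the solution set of $\mathrm{LCP}(A_H+I,-\mathbf{e})$ with $A_H$ its adjacency matrix. The support of $x$ is $\sigma(x):=\{i\in V\mid x_i>0\}$. For $S\subseteq V$, $G_S$ is the subgraph induced by $S$ and $x_S$ the subvector of $x$ indexed by $S$. A set $S\subseteq V$ is dominating if every vertex outside $S$ has a neighbour in $S$. *)

theory Defs
  imports Complex_Main
begin

text \<open>Vectors indexed by V are functions nat => real that vanish outside V.\<close>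

definition simple_graph :: "nat set \<Rightarrow> (nat \<Rightarrow> nat \<Rightarrow> bool) \<Rightarrow> bool" where
  "simple_graph V E \<longleftrightarrow> finite V \<and> (\<forall>i j. E i j \<longrightarrow> E j i) \<and> (\<forall>i. \<not> E i i)
     \<and> (\<forall>i j. E i j \<longrightarrow> i \<in> V \<and> j \<in> V)"

definition adj :: "(nat \<Rightarrow> nat \<Rightarrow> bool) \<Rightarrow> nat \<Rightarrow> nat \<Rightarrow> real" where
  "adj E i j = (if E i j then 1 else 0)"

definition adjI :: "(nat \<Rightarrow> nat \<Rightarrow> bool) \<Rightarrow> nat \<Rightarrow> nat \<Rightarrow> real" where
  "adjI E i j = adj E i j + (if i = j then 1 else 0)"

text \<open>Matrix-vector product ((A_H + I) x)_i for the graph H with vertex set S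
(the induced subgraph of E on S).\<close>
definition mulv :: "nat set \<Rightarrow> (nat \<Rightarrow> nat \<Rightarrow> bool) \<Rightarrow> (nat \<Rightarrow> real) \<Rightarrow> nat \<Rightarrow> real" where
  "mulv S E x i = (\<Sum>j\<in>S. adjI E i j * x j)"

definition SOL :: "nat set \<Rightarrow> (nat \<Rightarrow> nat \<Rightarrow> bool) \<Rightarrow> (nat \<Rightarrow> real) set" where
  "SOL S E = {x. (\<forall>i. i \<notin> S \<longrightarrow> x i = 0)
                 \<and> (\<forall>i\<in>S. 0 \<le> x i)
                 \<and> (\<forall>i\<in>S. mulv S E x i \<ge> 1)
                 \<and> (\<Sum>i\<in>S. x i * (mulv S E x i - 1)) = 0}"

definition supp :: "nat set \<Rightarrow> (nat \<Rightarrow> real) \<Rightarrow> nat set" where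
  "supp S x = {i \<in> S. x i > 0}"

definition dominating :: "nat set \<Rightarrow> (nat \<Rightarrow> nat \<Rightarrow> bool) \<Rightarrow> nat set \<Rightarrow> bool" where
  "dominating V E D \<longleftrightarrow> D \<subseteq> V \<and> (\<forall>v \<in> V - D. \<exists>u \<in> D. E v u)"

definition restr :: "nat set \<Rightarrow> (nat \<Rightarrow> real) \<Rightarrow> nat \<Rightarrow> real" where
  "restr S x = (\<lambda>i. if i \<in> S then x i else 0)"

end

theory Submission
  imports Defs
begin

text \<open>Everything follows from reading the complementarity condition coordinatewise:
since each summand \<open>x i * ((A + I) x - e)\<^sub>i\<close> is nonnegative, their sum vanishes iff each
coordinate has \<open>x i = 0\<close> or \<open>((A + I) x)\<^sub>i = 1\<close>. As \<open>((A + I) x)\<^sub>i \<ge> x i\<close>, the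
latter forces \<open>x i \<le> 1\<close>; a vertex outside the support still needs \<open>((A + I) x)\<^sub>i \<ge> 1\<close>,
which only a neighbour in the support can provide; and on the support, or on a union of
mutually nonadjacent components, the products \<open>(A + I) x\<close> only see the relevant coordinates.\<close>

lemma adjI_nonneg: "adjI E i j \<ge> 0"
  by (simp add: adjI_def adj_def)

lemma mem_SOL_iff:
  assumes "finite S"
  shows "x \<in> SOL S E \<longleftrightarrow> (\<forall>i. i \<notin> S \<longrightarrow> x i = 0)
    \<and> (\<forall>i\<in>S. 0 \<le> x i \<and> 1 \<le> mulv S E x i \<and> (x i = 0 \<or> mulv S E x i = 1))"
proof -
  have "(\<Sum>i\<in>S. x i * (mulv S E x i - 1)) = 0 \<longleftrightarrow> (\<forall>i\<in>S. x i * (mulv S E x i - 1) = 0)"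
    if "\<forall>i\<in>S. 0 \<le> x i \<and> 1 \<le> mulv S E x i"
    using that by (intro sum_nonneg_eq_0_iff[OF assms]) simp
  then show ?thesis
    unfolding SOL_def by auto
qed

lemma zero_notin_SOL:
  assumes "S \<noteq> {}"
  shows "(\<lambda>i. 0) \<notin> SOL S E"
  using assms by (auto simp: SOL_def mulv_def)

lemma mulv_ge_self:
  assumes "finite S" "\<forall>j\<in>S. 0 \<le> x j" "i \<in> S" "\<not> E i i"
  shows "x i \<le> mulv S E x i"
proof -
  have "adjI E i i * x i \<le> (\<Sum>j\<in>S. adjI E i j * x j)"
    by (rule member_le_sum) (use assms adjI_nonneg in auto)
  then show ?thesis
    using assms(4) by (simp add: mulv_def adjI_def adj_def)
qed

lemma SOL_le_one:
  assumes "finite S" "x \<in> SOL S E" "i \<in> S" "\<not> E i i"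
  shows "x i \<le> 1"
proof -
  have "0 \<le> x i" "x i = 0 \<or> mulv S E x i = 1" "\<forall>j\<in>S. 0 \<le> x j"
    using assms(2,3) by (auto simp: mem_SOL_iff[OF assms(1)])
  then show ?thesis
    using mulv_ge_self[of S x i E] assms(1,3,4) by auto
qed

lemma mulv_cong:
  assumes "\<forall>j\<in>S. x j = y j"
  shows "mulv S E x i = mulv S E y i"
  unfolding mulv_def using assms by (auto intro: sum.cong)

lemma mulv_restr: "mulv S E (restr S x) i = mulv S E x i"
  by (rule mulv_cong) (simp add: restr_def)

lemma mulv_union_nonadjacent:
  assumes "finite V" "finite W" "V \<inter> W = {}" "i \<in> V" "\<forall>j\<in>W. \<not> E i j"
  shows "mulv (V \<union> W) E x i = mulv V E x i"
proof -
  have "mulv W E x i = 0"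
    unfolding mulv_def using assms(3-5) by (auto simp: adjI_def adj_def intro!: sum.neutral)
  moreover have "mulv (V \<union> W) E x i = mulv V E x i + mulv W E x i"
    unfolding mulv_def by (rule sum.union_disjoint) (use assms in auto)
  ultimately show ?thesis by simp
qed

lemma restr_mem_SOL_component:
  assumes "finite V" "finite W" "V \<inter> W = {}" "\<forall>i\<in>V. \<forall>j\<in>W. \<not> E i j"
    and x: "x \<in> SOL (V \<union> W) E"
  shows "restr V x \<in> SOL V E"
proof -
  have "mulv V E (restr V x) i = mulv (V \<union> W) E x i" if "i \<in> V" for i
    using mulv_union_nonadjacent[OF assms(1-3)] assms(4) that by (simp add: mulv_restr)
  then show ?thesis
    using x assms(1,2) by (auto simp: mem_SOL_iff restr_def)
qed

lemma glue_mem_SOL: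
  assumes "finite V" "finite W" "V \<inter> W = {}"
    and nonadj: "\<forall>i\<in>V. \<forall>j\<in>W. \<not> E i j \<and> \<not> E j i"
    and y: "y \<in> SOL V E" and z: "z \<in> SOL W E"
  shows "(\<lambda>i. if i \<in> V then y i else z i) \<in> SOL (V \<union> W) E"
    (is "?x \<in> _")
proof -
  have "mulv (V \<union> W) E ?x i = mulv V E y i" if "i \<in> V" for i
    using mulv_union_nonadjacent[OF assms(1-3)] nonadj that mulv_cong[of V ?x y] by auto
  moreover have "mulv (V \<union> W) E ?x i = mulv W E z i" if "i \<in> W" for i
  proof -
    have "mulv (W \<union> V) E ?x i = mulv W E ?x i"
      using mulv_union_nonadjacent[OF assms(2,1)] assms(3) nonadj that by (simp add: Int_commute)
    also have "\<dots> = mulv W E z i"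
      using assms(3) by (intro mulv_cong) auto
    finally show ?thesis by (simp add: Un_commute)
  qed
  ultimately show ?thesis
    using y z assms(1-3) by (auto simp: mem_SOL_iff)
qed

lemma SOL_disjoint_union:
  assumes "finite V" "finite W" "V \<inter> W = {}"
    and nonadj: "\<forall>i\<in>V. \<forall>j\<in>W. \<not> E i j \<and> \<not> E j i"
  shows "bij_betw (\<lambda>x. (restr V x, restr W x)) (SOL (V \<union> W) E) (SOL V E \<times> SOL W E)"
proof (rule bij_betw_byWitness[where f' = "\<lambda>(y, z) i. if i \<in> V then y i else z i"])
  show "\<forall>x\<in>SOL (V \<union> W) E. (\<lambda>(y, z) i. if i \<in> V then y i else z i) (restr V x, restr W x) = x"
    using assms(1,2) by (auto simp: mem_SOL_iff restr_def fun_eq_iff)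
  show "\<forall>p\<in>SOL V E \<times> SOL W E.
      (\<lambda>x. (restr V x, restr W x)) ((\<lambda>(y, z) i. if i \<in> V then y i else z i) p) = p"
    using assms(1-3) by (auto simp: mem_SOL_iff restr_def fun_eq_iff)
  have "restr V x \<in> SOL V E" "restr W x \<in> SOL W E" if "x \<in> SOL (V \<union> W) E" for x
    using restr_mem_SOL_component[OF assms(1-3)] restr_mem_SOL_component[OF assms(2,1)]
      assms(3) nonadj that by (auto simp: Un_commute Int_commute)
  then show "(\<lambda>x. (restr V x, restr W x)) ` SOL (V \<union> W) E \<subseteq> SOL V E \<times> SOL W E"
    by auto
  show "(\<lambda>(y, z) i. if i \<in> V then y i else z i) ` (SOL V E \<times> SOL W E) \<subseteq> SOL (V \<union> W) E"
    using glue_mem_SOL[OF assms] by auto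
qed

lemma supp_dominating:
  assumes "finite S" and x: "x \<in> SOL S E"
  shows "dominating S E (supp S x)"
  unfolding dominating_def
proof (intro conjI ballI)
  show "supp S x \<subseteq> S" by (auto simp: supp_def)
  fix v assume v: "v \<in> S - supp S x"
  have nonneg: "\<forall>i\<in>S. 0 \<le> x i" and "mulv S E x v \<ge> 1"
    using x v by (auto simp: mem_SOL_iff[OF assms(1)])
  then obtain u where u: "u \<in> S" "adjI E v u * x u \<noteq> 0"
    unfolding mulv_def by (metis (no_types, lifting) not_one_le_zero sum.neutral)
  have "x v = 0"
    using nonneg v by (force simp: supp_def)
  then have "u \<noteq> v"
    using u by auto
  with u nonneg show "\<exists>u\<in>supp S x. E v u"
    by (intro bexI[of _ u]) (auto simp: adjI_def adj_def supp_def split: if_splits)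
qed

lemma mulv_supp:
  assumes "finite S" "\<forall>j\<in>S. 0 \<le> x j"
  shows "mulv (supp S x) E x i = mulv S E x i"
  unfolding mulv_def
  by (rule sum.mono_neutral_left[OF assms(1)]) (use assms(2) in \<open>force simp: supp_def\<close>)+

lemma restr_supp_mem_SOL:
  assumes "finite S" and x: "x \<in> SOL S E"
  shows "restr (supp S x) x \<in> SOL (supp S x) E"
proof -
  have "\<forall>j\<in>S. 0 \<le> x j"
    using x by (simp add: mem_SOL_iff[OF assms(1)])
  then have "mulv (supp S x) E (restr (supp S x) x) i = mulv S E x i" for i
    using mulv_supp[OF assms(1)] by (simp add: mulv_restr)
  then show ?thesis
    using x assms(1) by (auto simp: mem_SOL_iff restr_def supp_def)
qed

lemma supp_restr_supp: "supp (supp S x) (restr (supp S x) x) = supp S x"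
  by (auto simp: supp_def restr_def)

theorem lemma1:
  fixes n :: nat and E :: "nat \<Rightarrow> nat \<Rightarrow> bool"
  assumes "n \<ge> 1" and G: "simple_graph {1..n} E"
  shows "(\<lambda>i. 0) \<notin> SOL {1..n} E
    \<and> (\<forall>x\<in>SOL {1..n} E. \<forall>i\<in>{1..n}. mulv {1..n} E x i \<ge> x i)
    \<and> (\<forall>x\<in>SOL {1..n} E. \<forall>i\<in>{1..n}. 0 \<le> x i \<and> x i \<le> 1)
    \<and> (\<forall>V1 V2. V1 \<union> V2 = {1..n} \<longrightarrow> V1 \<inter> V2 = {} \<longrightarrow>
           (\<forall>i\<in>V1. \<forall>j\<in>V2. \<not> E i j) \<longrightarrow>
           bij_betw (\<lambda>x. (restr V1 x, restr V2 x)) (SOL {1..n} E) (SOL V1 E \<times> SOL V2 E))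
    \<and> (\<forall>x\<in>SOL {1..n} E. dominating {1..n} E (supp {1..n} x))
    \<and> (\<forall>x\<in>SOL {1..n} E. restr (supp {1..n} x) x \<in> SOL (supp {1..n} x) E
           \<and> supp (supp {1..n} x) (restr (supp {1..n} x) x) = supp {1..n} x)"
proof -
  have fin: "finite {1..n}" by simp
  have irrefl: "\<And>i. \<not> E i i" and sym: "\<And>i j. E i j \<Longrightarrow> E j i"
    using G by (auto simp: simple_graph_def)
  have nonneg: "\<forall>j\<in>{1..n}. 0 \<le> x j" if "x \<in> SOL {1..n} E" for x
    using that mem_SOL_iff[OF fin] by blast
  have components: "bij_betw (\<lambda>x. (restr V1 x, restr V2 x)) (SOL {1..n} E) (SOL V1 E \<times> SOL V2 E)"
    if "V1 \<union> V2 = {1..n}" "V1 \<inter> V2 = {}" "\<forall>i\<in>V1. \<forall>j\<in>V2. \<not> E i j" for V1 V2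
  proof -
    have "finite V1" "finite V2"
      using fin that(1) by (metis finite_Un)+
    with that show ?thesis
      using SOL_disjoint_union[of V1 V2 E] sym by metis
  qed
  show ?thesis
    using assms(1) zero_notin_SOL[of "{1..n}" E] mulv_ge_self[OF fin nonneg] irrefl nonneg
      SOL_le_one[OF fin] components supp_dominating[OF fin]
      restr_supp_mem_SOL[OF fin] supp_restr_supp
    by auto
qed

end
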